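(* Let $G$ be a finite simple graph and let $G_1,\dots,G_k$ be its connected components. Then $\alpha^*(G)\geq \sum_{i=1}^k \alpha^*(G_i)$. As a result, if $G$ has $k$ components, then $\alpha^*(G)\geq k$.
   Context: For a graph $H$, an independent set $I$ of $H$ is light if $\sum_{u\in I}d_H(u)\le |V(H)|-1$; $\alpha^*(H)$ is the maximum size of a light independent set of $H$. *)

theory Defs
  imports Main
begin

definition simple_graph :: "'a set \<Rightarrow> ('a \<Rightarrow> 'a \<Rightarrow> bool) \<Rightarrow> bool" where
  "simple_graph V E \<longleftrightarrow> finite V \<and> (\<forall>x y. E x y \<longrightarrow> x \<in> V \<and> y \<in> V)
     \<and> (\<forall>x y. E x y \<longrightarrow> E y x) \<and> (\<forall>x. \<not> E x x)"

definition degree :: "'a set \<Rightarrow> ('a \<Rightarrow> 'a \<Rightarrow> bool) \<Rightarrow> 'a \<Rightarrow> nat" where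
  "degree V E u = card {v \<in> V. E u v}"

definition independent_set :: "'a set \<Rightarrow> ('a \<Rightarrow> 'a \<Rightarrow> bool) \<Rightarrow> 'a set \<Rightarrow> bool" where
  "independent_set V E I \<longleftrightarrow> I \<subseteq> V \<and> (\<forall>x\<in>I. \<forall>y\<in>I. \<not> E x y)"

definition light_set :: "'a set \<Rightarrow> ('a \<Rightarrow> 'a \<Rightarrow> bool) \<Rightarrow> 'a set \<Rightarrow> bool" where
  "light_set V E I \<longleftrightarrow> independent_set V E I \<and>
     int (\<Sum>u\<in>I. degree V E u) \<le> int (card V) - 1"

definition alpha_star :: "'a set \<Rightarrow> ('a \<Rightarrow> 'a \<Rightarrow> bool) \<Rightarrow> nat" where
  "alpha_star V E = Max {card I | I. light_set V E I}"

definition induced :: "('a \<Rightarrow> 'a \<Rightarrow> bool) \<Rightarrow> 'a set \<Rightarrow> 'a \<Rightarrow> 'a \<Rightarrow> bool" where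
  "induced E C = (\<lambda>x y. E x y \<and> x \<in> C \<and> y \<in> C)"

definition components :: "'a set \<Rightarrow> ('a \<Rightarrow> 'a \<Rightarrow> bool) \<Rightarrow> 'a set set" where
  "components V E = {{w. E\<^sup>*\<^sup>* v w} | v. v \<in> V}"

end

theory Submission
  imports Defs
begin

text \<open>Pick a maximum light independent set in every component and take their union \<open>I\<close>.
  There are no edges between components and degrees do not change when passing to a component,
  so \<open>I\<close> is independent and its degree sum is at most
  \<open>\<Sum>\<^sub>i (|V(G\<^sub>i)| - 1) = |V(G)| - k \<le> |V(G)| - 1\<close>.
  For the second claim, a single vertex \<open>v\<close> of a component \<open>C\<close> is light because
  \<open>d(v) \<le> |C| - 1\<close>, so every component contributes at least one.\<close>

lemma finite_light_set_cards:
  assumes "finite V"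
  shows "finite {card I | I. light_set V E I}"
proof -
  have "{card I | I. light_set V E I} \<subseteq> card ` Pow V"
    by (auto simp: light_set_def independent_set_def)
  then show ?thesis
    using assms finite_subset by blast
qed

lemma card_le_alpha_star:
  assumes "finite V" and "light_set V E I"
  shows "card I \<le> alpha_star V E"
  unfolding alpha_star_def using assms finite_light_set_cards[OF assms(1)]
  by (intro Max_ge) auto

lemma light_set_empty:
  assumes "finite V" and "V \<noteq> {}"
  shows "light_set V E {}"
  using assms by (auto simp: light_set_def independent_set_def card_gt_0_iff)

lemma alpha_star_attained:
  assumes "finite V" and "V \<noteq> {}"
  obtains I where "light_set V E I" and "card I = alpha_star V E"
proof -
  have "{card I | I. light_set V E I} \<noteq> {}"
    using light_set_empty[OF assms] by blast
  then have "alpha_star V E \<in> {card I | I. light_set V E I}"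
    unfolding alpha_star_def by (rule Max_in[OF finite_light_set_cards[OF assms(1)]])
  then show ?thesis
    using that by auto
qed

lemma degree_le_card_minus_one:
  assumes "simple_graph V E" and "v \<in> V"
  shows "degree V E v \<le> card V - 1"
proof -
  have "{w \<in> V. E v w} \<subseteq> V - {v}"
    using assms(1) by (auto simp: simple_graph_def)
  then have "degree V E v \<le> card (V - {v})"
    unfolding degree_def using assms(1) by (intro card_mono) (auto simp: simple_graph_def)
  then show ?thesis
    using assms(2) by simp
qed

lemma light_set_singleton:
  assumes "simple_graph V E" and "v \<in> V"
  shows "light_set V E {v}"
proof -
  have "card V > 0"
    using assms card_gt_0_iff by (auto simp: simple_graph_def)
  then have "int (degree V E v) \<le> int (card V) - 1"
    using degree_le_card_minus_one[OF assms] by linarith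
  then show ?thesis
    using assms by (auto simp: light_set_def independent_set_def simple_graph_def)
qed

lemma one_le_alpha_star:
  assumes "simple_graph V E" and "V \<noteq> {}"
  shows "1 \<le> alpha_star V E"
proof -
  obtain v where "v \<in> V"
    using assms(2) by blast
  from card_le_alpha_star[OF _ light_set_singleton[OF assms(1) this]] assms(1)
  show ?thesis
    by (simp add: simple_graph_def)
qed

lemma component_nonempty:
  assumes "C \<in> components V E"
  shows "C \<noteq> {}"
  using assms unfolding components_def by auto

lemma simple_graph_induced:
  assumes "simple_graph V E" and "C \<subseteq> V"
  shows "simple_graph C (induced E C)"
  using assms finite_subset by (auto simp: simple_graph_def induced_def)

context
  fixes V :: "'a set" and E :: "'a \<Rightarrow> 'a \<Rightarrow> bool"
  assumes graph: "simple_graph V E"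
begin

lemma reachable_mem_vertices:
  assumes "E\<^sup>*\<^sup>* v w" and "v \<in> V"
  shows "w \<in> V"
  using assms graph by (induction rule: rtranclp_induct) (auto simp: simple_graph_def)

lemma component_subset_vertices:
  assumes "C \<in> components V E"
  shows "C \<subseteq> V"
  using assms reachable_mem_vertices unfolding components_def by auto

lemma finite_component:
  assumes "C \<in> components V E"
  shows "finite C"
  using component_subset_vertices[OF assms] graph finite_subset
  by (auto simp: simple_graph_def)

lemma component_closed:
  assumes "C \<in> components V E" and "u \<in> C" and "E u w"
  shows "w \<in> C"
  using assms unfolding components_def by (auto intro: rtranclp.rtrancl_into_rtrancl)

lemma component_eq_reachable:
  assumes "C \<in> components V E" and "x \<in> C"
  shows "C = {w. E\<^sup>*\<^sup>* x w}"
proof -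
  have "equivp E\<^sup>*\<^sup>*"
    using graph by (intro equivp_rtranclp sympI) (auto simp: simple_graph_def)
  moreover obtain v where "C = {w. E\<^sup>*\<^sup>* v w}"
    using assms(1) unfolding components_def by blast
  ultimately show ?thesis
    using assms(2) by (metis equivp_def mem_Collect_eq)
qed

lemma components_disjoint:
  assumes "C \<in> components V E" and "D \<in> components V E" and "C \<noteq> D"
  shows "C \<inter> D = {}"
  using assms component_eq_reachable by blast

lemma finite_components: "finite (components V E)"
proof -
  have "components V E = (\<lambda>v. {w. E\<^sup>*\<^sup>* v w}) ` V"
    unfolding components_def by auto
  then show ?thesis
    using graph by (simp add: simple_graph_def)
qed

lemma card_components_pos:
  assumes "V \<noteq> {}"
  shows "0 < card (components V E)"
  using assms finite_components unfolding components_def by (auto simp: card_gt_0_iff)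

lemma sum_card_components: "(\<Sum>C\<in>components V E. card C) = card V"
proof -
  have "\<Union>(components V E) = V"
    using component_subset_vertices unfolding components_def by blast
  then show ?thesis
    using card_Union_disjoint[of "components V E"] finite_component components_disjoint
    by (auto simp: pairwise_def disjnt_def)
qed

lemma degree_induced_component:
  assumes "C \<in> components V E" and "u \<in> C"
  shows "degree C (induced E C) u = degree V E u"
proof -
  have "{v \<in> C. induced E C u v} = {v \<in> V. E u v}"
    using assms component_closed component_subset_vertices unfolding induced_def by blast
  then show ?thesis
    unfolding degree_def by simp
qed

context
  fixes I :: "'a set \<Rightarrow> 'a set"
  assumes light: "\<And>C. C \<in> components V E \<Longrightarrow> light_set C (induced E C) (I C)"
begin

lemma light_part_subset_component:
  assumes "C \<in> components V E"
  shows "I C \<subseteq> C"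
  using light[OF assms] by (simp add: light_set_def independent_set_def)

lemma light_parts_disjoint:
  "\<forall>C\<in>components V E. \<forall>D\<in>components V E. C \<noteq> D \<longrightarrow> I C \<inter> I D = {}"
  using light_part_subset_component components_disjoint by blast

lemma finite_light_part:
  assumes "C \<in> components V E"
  shows "finite (I C)"
  using light_part_subset_component[OF assms] finite_component[OF assms] finite_subset by blast

lemma card_Union_light_parts:
  "card (\<Union>C\<in>components V E. I C) = (\<Sum>C\<in>components V E. card (I C))"
  using card_UN_disjoint[OF finite_components _ light_parts_disjoint] finite_light_part by simp

lemma independent_set_Union_light_parts:
  "independent_set V E (\<Union>C\<in>components V E. I C)"
  unfolding independent_set_def
proof (intro conjI ballI notI)
  show "(\<Union>C\<in>components V E. I C) \<subseteq> V"
    using light_part_subset_component component_subset_vertices by blast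
next
  fix x y
  assume "x \<in> (\<Union>C\<in>components V E. I C)" and "y \<in> (\<Union>C\<in>components V E. I C)" and "E x y"
  then obtain C D where C: "C \<in> components V E" "x \<in> I C" and D: "D \<in> components V E" "y \<in> I D"
    by blast
  have "y \<in> C"
    using component_closed[OF C(1) _ \<open>E x y\<close>] light_part_subset_component C by blast
  then have "C = D"
    using components_disjoint C D light_part_subset_component by blast
  then have "\<not> induced E C x y"
    using light[OF C(1)] C D by (auto simp: light_set_def independent_set_def)
  then show False
    using \<open>E x y\<close> \<open>y \<in> C\<close> C light_part_subset_component unfolding induced_def by blast
qed

lemma sum_degree_Union_light_parts_le:
  "int (\<Sum>u\<in>(\<Union>C\<in>components V E. I C). degree V E u)
     \<le> int (card V) - int (card (components V E))"
proof -
  let ?K = "components V E"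
  have "int (\<Sum>u\<in>(\<Union>C\<in>?K. I C). degree V E u) = (\<Sum>C\<in>?K. int (\<Sum>u\<in>I C. degree V E u))"
    using sum.UNION_disjoint[OF finite_components _ light_parts_disjoint] finite_light_part
    by simp
  also have "\<dots> = (\<Sum>C\<in>?K. int (\<Sum>u\<in>I C. degree C (induced E C) u))"
  proof (rule sum.cong[OF refl])
    fix C
    assume "C \<in> ?K"
    then have "(\<Sum>u\<in>I C. degree V E u) = (\<Sum>u\<in>I C. degree C (induced E C) u)"
      using degree_induced_component light_part_subset_component by (intro sum.cong refl) (metis subsetD)
    then show "int (\<Sum>u\<in>I C. degree V E u) = int (\<Sum>u\<in>I C. degree C (induced E C) u)"
      by simp
  qed
  also have "\<dots> \<le> (\<Sum>C\<in>?K. int (card C) - 1)"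
    using light by (intro sum_mono) (simp add: light_set_def)
  also have "\<dots> = int (card V) - int (card ?K)"
    by (simp add: sum_subtractf sum_card_components flip: of_nat_sum)
  finally show ?thesis .
qed

lemma light_set_Union_light_parts:
  assumes "V \<noteq> {}"
  shows "light_set V E (\<Union>C\<in>components V E. I C)"
  using independent_set_Union_light_parts sum_degree_Union_light_parts_le
    card_components_pos[OF assms]
  unfolding light_set_def by linarith

end

end

theorem lemma2p2:
  fixes V :: "'a set" and E :: "'a \<Rightarrow> 'a \<Rightarrow> bool"
  assumes "simple_graph V E" and "V \<noteq> {}"
  shows "(\<Sum>C\<in>components V E. alpha_star C (induced E C)) \<le> alpha_star V E
       \<and> card (components V E) \<le> alpha_star V E"
proof -
  let ?K = "components V E" and ?\<alpha> = "\<lambda>C. alpha_star C (induced E C)"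
  have "\<exists>I. light_set C (induced E C) I \<and> card I = ?\<alpha> C" if "C \<in> ?K" for C
    using alpha_star_attained finite_component[OF assms(1) that]
      component_nonempty[OF that] by metis
  then obtain I where I: "\<And>C. C \<in> ?K \<Longrightarrow> light_set C (induced E C) (I C) \<and> card (I C) = ?\<alpha> C"
    by metis
  have "(\<Sum>C\<in>?K. ?\<alpha> C) = card (\<Union>C\<in>?K. I C)"
    using card_Union_light_parts[OF assms(1), of I] I by simp
  also have "\<dots> \<le> alpha_star V E"
  proof (rule card_le_alpha_star)
    show "finite V"
      using assms(1) by (simp add: simple_graph_def)
    show "light_set V E (\<Union>C\<in>?K. I C)"
      using light_set_Union_light_parts[OF assms(1) _ assms(2)] I by blast
  qed
  finally have sum_le: "(\<Sum>C\<in>?K. ?\<alpha> C) \<le> alpha_star V E" .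
  have "1 \<le> ?\<alpha> C" if "C \<in> ?K" for C
    using one_le_alpha_star simple_graph_induced[OF assms(1) component_subset_vertices]
      component_nonempty assms(1) that by blast
  then have "card ?K \<le> (\<Sum>C\<in>?K. ?\<alpha> C)"
    using sum_mono[of ?K "\<lambda>_. 1" ?\<alpha>] by simp
  with sum_le show ?thesis
    by simp
qed

end
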